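(* Let $M$ be a Kähler QCH-manifold of real dimension $2n$ with curvature $\bar R=a\pi+b\Phi+c\Psi$, and let $N$ be a Lagrangian submanifold of $M$ of real dimension $n\geq 3$. Then for every $p\in N$ and every unit vector $X\in T_pN$, $$\mathrm{Ric}(X)\geq -\frac{(n-2)(n-1)(n+1)}{8}a-\frac{n-2}{8}\{n-[\eta(X)^2+\tilde\eta(X)^2]\}b-\{(n-1)[\|\eta^\top\|^2\|\tilde\eta^\top\|^2-g(\eta^\top,\tilde\eta^\top)^2]-\|\eta(X)\tilde\eta^\top-\tilde\eta(X)\eta^\top\|^2\}c+(n-1)\tau-\frac{(3n-1)(n-2)n^2}{2(3n+5)}\|H\|^2,$$ where $a,b,c$ are evaluated at $p$ and $\tau$ is the scalar curvature of $N$ at $p$. Equality holds for every unit vector $X\in T_pN$ if and only if $p$ is a totally geodesic point of $N$.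
   Context: A Kähler QCH-manifold (Kähler manifold of quasi-constant holomorphic sectional curvatures) is a Kähler manifold $(M,g,J,D)$ of real dimension $2n\geq 4$ with a $J$-invariant distribution $D$ of codimension 2, together with a local unit vector field $\xi$ such that $D^\perp=\mathrm{span}\{\xi,J\xi\}$, whose curvature tensor satisfies $\bar R=a\pi+b\Phi+c\Psi$ for functions $a,b,c$ on $M$. Here $\bar R(X,Y,Z,U)=g(\bar R(X,Y)Z,U)$ with $\bar R(X,Y)Z=\bar\nabla_X\bar\nabla_YZ-\bar\nabla_Y\bar\nabla_XZ-\bar\nabla_{[X,Y]}Z$; $\eta(X)=g(\xi,X)$, $\tilde\eta(X)=g(J\xi,X)$; and $4\pi(X,Y,Z,U)=g(Y,Z)g(X,U)-g(X,Z)g(Y,U)+g(JY,Z)g(JX,U)-g(JX,Z)g(JY,U)-2g(JX,Y)g(JZ,U)$; $8\Phi(X,Y,Z,U)=g(Y,Z)\{\eta(X)\eta(U)+\tilde\eta(X)\tilde\eta(U)\}-g(X,Z)\{\eta(Y)\eta(U)+\tilde\eta(Y)\tilde\eta(U)\}+g(X,U)\{\eta(Y)\eta(Z)+\tilde\eta(Y)\tilde\eta(Z)\}-g(Y,U)\{\eta(X)\eta(Z)+\tilde\eta(X)\tilde\eta(Z)\}+g(JY,Z)\{\eta(X)\tilde\eta(U)-\eta(U)\tilde\eta(X)\}-g(JX,Z)\{\eta(Y)\tilde\eta(U)-\eta(U)\tilde\eta(Y)\}+g(JX,U)\{\eta(Y)\tilde\eta(Z)-\eta(Z)\tilde\eta(Y)\}-g(JY,U)\{\eta(X)\tilde\eta(Z)-\eta(Z)\tilde\eta(X)\}-2g(JX,Y)\{\eta(Z)\tilde\eta(U)-\eta(U)\tilde\eta(Z)\}-2g(JZ,U)\{\eta(X)\tilde\eta(Y)-\eta(Y)\tilde\eta(X)\}$;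 $\Psi(X,Y,Z,U)=\eta(Y)\eta(Z)\tilde\eta(X)\tilde\eta(U)-\eta(X)\eta(Z)\tilde\eta(Y)\tilde\eta(U)+\eta(X)\eta(U)\tilde\eta(Y)\tilde\eta(Z)-\eta(Y)\eta(U)\tilde\eta(X)\tilde\eta(Z)$. A submanifold $N$ of real dimension $n$ is Lagrangian if $J$ maps each $T_pN$ onto the normal space $T_pN^\perp$. $h$ is the second fundamental form, $H=\frac1n\sum_{i=1}^n h(e_i,e_i)$ the mean curvature vector ($\{e_i\}$ an orthonormal basis of $T_pN$); $p$ is totally geodesic if $h=0$ at $p$. The curvature $R$ of $N$ uses the same sign convention; the sectional curvature is $K(e_i\wedge e_j)=R(e_i,e_j,e_j,e_i)$, the scalar curvature is $\tau(p)=\sum_{1\leq i<j\leq n}K(e_i\wedge e_j)$, and for a unit $X=e_1\in T_pN$, $\mathrm{Ric}(X)=\sum_{i=2}^n K(e_1\wedge e_i)$. $\eta^\top,\tilde\eta^\top$ denote the orthogonal projections onto $T_pN$ of the vectors $\xi$, $J\xi$ (the metric duals of $\eta,\tilde\eta$), and $\|\cdot\|$ is the norm induced by $g$. *)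

theory Defs
  imports "HOL-Analysis.Analysis"
begin

text \<open>The tangent space of M at p is a real
inner product space V of dimension 2n with complex structure J; xi is the
value at p of the unit vector field spanning D-perp together with J xi.\<close>

definition piT :: "('a::real_inner \<Rightarrow> 'a) \<Rightarrow> 'a \<Rightarrow> 'a \<Rightarrow> 'a \<Rightarrow> 'a \<Rightarrow> real" where
  "piT J X Y Z U = (1/4) *
     (inner Y Z * inner X U - inner X Z * inner Y U
      + inner (J Y) Z * inner (J X) U - inner (J X) Z * inner (J Y) U
      - 2 * inner (J X) Y * inner (J Z) U)"

definition PhiT :: "('a::real_inner \<Rightarrow> 'a) \<Rightarrow> 'a \<Rightarrow> 'a \<Rightarrow> 'a \<Rightarrow> 'a \<Rightarrow> 'a \<Rightarrow> real" where
  "PhiT J xi X Y Z U = (let eta = (\<lambda>v. inner xi v); et = (\<lambda>v. inner (J xi) v) in (1/8) *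
     (inner Y Z * (eta X * eta U + et X * et U)
      - inner X Z * (eta Y * eta U + et Y * et U)
      + inner X U * (eta Y * eta Z + et Y * et Z)
      - inner Y U * (eta X * eta Z + et X * et Z)
      + inner (J Y) Z * (eta X * et U - eta U * et X)
      - inner (J X) Z * (eta Y * et U - eta U * et Y)
      + inner (J X) U * (eta Y * et Z - eta Z * et Y)
      - inner (J Y) U * (eta X * et Z - eta Z * et X)
      - 2 * inner (J X) Y * (eta Z * et U - eta U * et Z)
      - 2 * inner (J Z) U * (eta X * et Y - eta Y * et X)))"

definition PsiT :: "('a::real_inner \<Rightarrow> 'a) \<Rightarrow> 'a \<Rightarrow> 'a \<Rightarrow> 'a \<Rightarrow> 'a \<Rightarrow> 'a \<Rightarrow> real" where
  "PsiT J xi X Y Z U = (let eta = (\<lambda>v. inner xi v); et = (\<lambda>v. inner (J xi) v) in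
      eta Y * eta Z * et X * et U - eta X * eta Z * et Y * et U
    + eta X * eta U * et Y * et Z - eta Y * eta U * et X * et Z)"

definition onb :: "'a::real_inner set \<Rightarrow> nat \<Rightarrow> (nat \<Rightarrow> 'a) \<Rightarrow> bool" where
  "onb T n e \<longleftrightarrow> (\<forall>i\<in>{1..n}. \<forall>j\<in>{1..n}. inner (e i) (e j) = (if i = j then 1 else 0))
                 \<and> span (e ` {1..n}) = T"

definition RicB :: "('a \<Rightarrow> 'a \<Rightarrow> 'a \<Rightarrow> 'a \<Rightarrow> real) \<Rightarrow> nat \<Rightarrow> (nat \<Rightarrow> 'a) \<Rightarrow> real" where
  "RicB R n e = (\<Sum>i\<in>{2..n}. R (e 1) (e i) (e i) (e 1))"

definition tauB :: "('a \<Rightarrow> 'a \<Rightarrow> 'a \<Rightarrow> 'a \<Rightarrow> real) \<Rightarrow> nat \<Rightarrow> (nat \<Rightarrow> 'a) \<Rightarrow> real" where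
  "tauB R n e = (\<Sum>j\<in>{1..n}. \<Sum>i\<in>{1..<j}. R (e i) (e j) (e j) (e i))"

definition meanH :: "('a::real_vector \<Rightarrow> 'a \<Rightarrow> 'a) \<Rightarrow> nat \<Rightarrow> (nat \<Rightarrow> 'a) \<Rightarrow> 'a" where
  "meanH h n e = (1 / real n) *\<^sub>R (\<Sum>i\<in>{1..n}. h (e i) (e i))"

definition tproj :: "nat \<Rightarrow> (nat \<Rightarrow> 'a::real_inner) \<Rightarrow> 'a \<Rightarrow> 'a" where
  "tproj n e v = (\<Sum>i\<in>{1..n}. inner v (e i) *\<^sub>R e i)"

end

theory Submission
  imports Defs
begin

text \<open>In an orthonormal frame \<open>e\<^sub>1 = X, \<dots>, e\<^sub>n\<close> of \<open>T\<^sub>pN\<close> put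
  \<open>s\<^sub>i\<^sub>j\<^sub>k = \<langle>h(e\<^sub>i, e\<^sub>j), J e\<^sub>k\<rangle>\<close>; for a Lagrangian submanifold of a Kaehler manifold \<open>s\<close> is
  totally symmetric. By the Gauss equation every sectional curvature \<open>K(e\<^sub>i \<and> e\<^sub>j)\<close> is the
  sectional curvature of the QCH curvature tensor, which depends only on \<open>a, b, c\<close> and the
  tangential components of \<open>\<xi>\<close> and \<open>J\<xi>\<close>, plus \<open>\<Sum>\<^sub>r s\<^sub>i\<^sub>i\<^sub>r s\<^sub>j\<^sub>j\<^sub>r - s\<^sub>i\<^sub>j\<^sub>r\<^sup>2\<close>. The QCH parts
  account exactly for the \<open>a\<close>-, \<open>b\<close>- and \<open>c\<close>-terms of the bound, so \<open>Ric(X)\<close> minus the bound is a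
  quadratic form in \<open>s\<close> alone. Splitting the indices as \<open>{1} \<union> {2..n}\<close>, this form is a sum of
  squares plus nonnegative multiples of two defects: that of the Cauchy--Schwarz inequality for
  \<open>(s\<^sub>1\<^sub>a\<^sub>a)\<close>, and that of \<open>3 \<Sum>\<^sub>a (\<Sum>\<^sub>b s\<^sub>b\<^sub>b\<^sub>a)\<^sup>2 \<le> (n + 1) \<Sum> s\<^sub>a\<^sub>b\<^sub>c\<^sup>2\<close>, valid for totally
  symmetric tensors on \<open>n - 1\<close> indices. It vanishes only if \<open>s\<^sub>1\<^sub>1\<^sub>1 = 0\<close> and \<open>s\<^sub>1\<^sub>a\<^sub>b = 0\<close> for
  \<open>a, b \<ge> 2\<close>; equality for every unit \<open>X\<close> thus forces \<open>s = 0\<close>, i.e. \<open>h = 0\<close>.\<close>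

section \<open>A quadratic inequality for totally symmetric cubic forms\<close>

lemma sum_lower_triangle_symmetric:
  fixes f :: "nat \<Rightarrow> nat \<Rightarrow> real"
  assumes sym: "\<And>i j. f i j = f j i"
  shows "(\<Sum>j\<in>{1..n}. \<Sum>i\<in>{1..<j}. f i j) = ((\<Sum>i\<in>{1..n}. \<Sum>j\<in>{1..n}. f i j) - (\<Sum>i\<in>{1..n}. f i i)) / 2"
proof (induction n)
  case 0
  then show ?case by simp
next
  case (Suc n)
  have last: "(\<Sum>i\<in>{1..Suc n}. g i) = (\<Sum>i\<in>{1..n}. g i) + g (Suc n)" for g :: "nat \<Rightarrow> real"
    by simp
  have "(\<Sum>i\<in>{1..Suc n}. \<Sum>j\<in>{1..Suc n}. f i j) = (\<Sum>i\<in>{1..n}. \<Sum>j\<in>{1..n}. f i j)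
      + 2 * (\<Sum>i\<in>{1..n}. f i (Suc n)) + f (Suc n) (Suc n)"
    using sym by (simp add: last sum.distrib)
  moreover have "(\<Sum>j\<in>{1..Suc n}. \<Sum>i\<in>{1..<j}. f i j)
      = (\<Sum>j\<in>{1..n}. \<Sum>i\<in>{1..<j}. f i j) + (\<Sum>i\<in>{1..n}. f i (Suc n))"
    by (simp only: last atLeastLessThanSuc_atLeastAtMost)
  ultimately show ?case using Suc by (simp add: last field_simps)
qed

lemma lagrange_identity:
  fixes f g :: "nat \<Rightarrow> real"
  shows "(\<Sum>i\<in>I. \<Sum>j\<in>I. (f j * g i - f i * g j)\<^sup>2)
    = 2 * ((\<Sum>i\<in>I. (f i)\<^sup>2) * (\<Sum>i\<in>I. (g i)\<^sup>2) - (\<Sum>i\<in>I. f i * g i)\<^sup>2)"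
proof -
  have "(\<Sum>i\<in>I. \<Sum>j\<in>I. (f j * g i - f i * g j)\<^sup>2)
     = (\<Sum>i\<in>I. \<Sum>j\<in>I. (g i)\<^sup>2 * (f j)\<^sup>2 + (f i)\<^sup>2 * (g j)\<^sup>2 - 2 * ((f i * g i) * (f j * g j)))"
    by (intro sum.cong refl) (simp add: power2_eq_square algebra_simps)
  also have "\<dots> = (\<Sum>i\<in>I. \<Sum>j\<in>I. (g i)\<^sup>2 * (f j)\<^sup>2) + (\<Sum>i\<in>I. \<Sum>j\<in>I. (f i)\<^sup>2 * (g j)\<^sup>2)
       - 2 * (\<Sum>i\<in>I. \<Sum>j\<in>I. (f i * g i) * (f j * g j))"
    by (simp add: sum.distrib sum_subtractf sum_distrib_left)
  also have "\<dots> = (\<Sum>i\<in>I. (g i)\<^sup>2) * (\<Sum>i\<in>I. (f i)\<^sup>2) + (\<Sum>i\<in>I. (f i)\<^sup>2) * (\<Sum>i\<in>I. (g i)\<^sup>2)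
       - 2 * ((\<Sum>i\<in>I. f i * g i) * (\<Sum>i\<in>I. f i * g i))"
    by (simp only: sum_product)
  finally show ?thesis by (simp add: power2_eq_square algebra_simps)
qed

lemma sum_symmetric_mult_trace_part:
  fixes X :: "nat \<Rightarrow> nat \<Rightarrow> nat \<Rightarrow> real" and \<nu> :: "nat \<Rightarrow> real"
  assumes fin: "finite A"
    and sym12: "\<And>i j k. X i j k = X j i k" and sym23: "\<And>i j k. X i j k = X i k j"
  shows "(\<Sum>i\<in>A. \<Sum>j\<in>A. \<Sum>k\<in>A. X i j k *
      (\<nu> i * (if j = k then 1 else 0) + \<nu> j * (if i = k then 1 else 0) + \<nu> k * (if i = j then 1 else 0)))
     = 3 * (\<Sum>i\<in>A. \<nu> i * (\<Sum>j\<in>A. X i j j))"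
proof -
  have X_iji: "X i j i = X j i i" and X_iij: "X i i j = X j i i" for i j
    by (metis sym12 sym23)+
  have "(\<Sum>i\<in>A. \<Sum>j\<in>A. \<Sum>k\<in>A. X i j k * (\<nu> j * (if i = k then 1 else 0))) = (\<Sum>i\<in>A. \<Sum>j\<in>A. X j i i * \<nu> j)"
    using fin by (simp add: if_distrib X_iji cong: if_cong)
  also have "\<dots> = (\<Sum>i\<in>A. \<nu> i * (\<Sum>j\<in>A. X i j j))"
    by (subst sum.swap) (simp add: sum_distrib_left ac_simps)
  finally have second: "(\<Sum>i\<in>A. \<Sum>j\<in>A. \<Sum>k\<in>A. X i j k * (\<nu> j * (if i = k then 1 else 0)))
      = (\<Sum>i\<in>A. \<nu> i * (\<Sum>j\<in>A. X i j j))" .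
  have "(\<Sum>i\<in>A. \<Sum>j\<in>A. \<Sum>k\<in>A. X i j k * (\<nu> k * (if i = j then 1 else 0)))
      = (\<Sum>i\<in>A. \<Sum>j\<in>A. if i = j then \<Sum>k\<in>A. X i i k * \<nu> k else 0)"
    by (intro sum.cong refl) auto
  also have "\<dots> = (\<Sum>i\<in>A. \<Sum>k\<in>A. X i i k * \<nu> k)"
    using fin by simp
  also have "\<dots> = (\<Sum>i\<in>A. \<Sum>k\<in>A. X k i i * \<nu> k)"
    by (intro sum.cong refl) (metis X_iij)
  also have "\<dots> = (\<Sum>i\<in>A. \<nu> i * (\<Sum>j\<in>A. X i j j))"
    by (subst sum.swap) (simp add: sum_distrib_left ac_simps)
  finally have third: "(\<Sum>i\<in>A. \<Sum>j\<in>A. \<Sum>k\<in>A. X i j k * (\<nu> k * (if i = j then 1 else 0)))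
      = (\<Sum>i\<in>A. \<nu> i * (\<Sum>j\<in>A. X i j j))" .
  have first: "(\<Sum>i\<in>A. \<Sum>j\<in>A. \<Sum>k\<in>A. X i j k * (\<nu> i * (if j = k then 1 else 0)))
      = (\<Sum>i\<in>A. \<nu> i * (\<Sum>j\<in>A. X i j j))"
    using fin by (simp add: if_distrib sum_distrib_left ac_simps cong: if_cong)
  show ?thesis using first second third by (simp add: distrib_left sum.distrib)
qed

text \<open>With \<open>q\<close> the pure-trace part of \<open>T\<close>, expanding \<open>0 \<le> \<parallel>(m + 2) T - q\<parallel>\<^sup>2\<close> gives the bound.\<close>
lemma trace_square_le_symmetric_tensor_norm:
  fixes T :: "nat \<Rightarrow> nat \<Rightarrow> nat \<Rightarrow> real"
  assumes fin: "finite A"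
    and sym12: "\<And>i j k. T i j k = T j i k" and sym23: "\<And>i j k. T i j k = T i k j"
  shows "3 * (\<Sum>i\<in>A. (\<Sum>j\<in>A. T j j i)\<^sup>2) \<le> (real (card A) + 2) * (\<Sum>i\<in>A. \<Sum>j\<in>A. \<Sum>k\<in>A. (T i j k)\<^sup>2)"
proof -
  define \<nu> where "\<nu> = (\<lambda>i. \<Sum>j\<in>A. T j j i)"
  define m where "m = real (card A)"
  define q where "q = (\<lambda>i j k. \<nu> i * (if j = k then 1 else 0) + \<nu> j * (if i = k then 1 else 0)
                               + \<nu> k * (if i = j then 1 else (0::real)))"
  have trace: "(\<Sum>j\<in>A. T i j j) = \<nu> i" for i unfolding \<nu>_def by (metis sym12 sym23)
  have Tq: "(\<Sum>i\<in>A. \<Sum>j\<in>A. \<Sum>k\<in>A. T i j k * q i j k) = 3 * (\<Sum>i\<in>A. \<nu> i * \<nu> i)"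
    unfolding q_def using sum_symmetric_mult_trace_part[OF fin sym12 sym23, where \<nu>=\<nu>] trace by simp
  have q_trace: "(\<Sum>j\<in>A. q i j j) = (m + 2) * \<nu> i" if "i \<in> A" for i
  proof -
    have "(\<Sum>j\<in>A. q i j j) = (\<Sum>j\<in>A. \<nu> i + (if i = j then 2 * \<nu> i else 0))"
      by (intro sum.cong) (auto simp: q_def)
    also have "\<dots> = (m + 2) * \<nu> i" using fin that by (simp add: sum.distrib m_def algebra_simps)
    finally show ?thesis .
  qed
  have qq: "(\<Sum>i\<in>A. \<Sum>j\<in>A. \<Sum>k\<in>A. q i j k * q i j k) = 3 * (m + 2) * (\<Sum>i\<in>A. \<nu> i * \<nu> i)"
  proof -
    have "(\<Sum>i\<in>A. \<Sum>j\<in>A. \<Sum>k\<in>A. q i j k * q i j k) = 3 * (\<Sum>i\<in>A. \<nu> i * (\<Sum>j\<in>A. q i j j))"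
      using sum_symmetric_mult_trace_part[OF fin, where X=q and \<nu>=\<nu>] by (simp add: q_def)
    also have "\<dots> = 3 * (\<Sum>i\<in>A. (m + 2) * (\<nu> i * \<nu> i))"
      by (simp add: q_trace ac_simps cong: sum.cong)
    finally show ?thesis by (simp add: sum_distrib_left[symmetric] mult.assoc)
  qed
  have "0 \<le> (\<Sum>i\<in>A. \<Sum>j\<in>A. \<Sum>k\<in>A. ((m + 2) * T i j k - q i j k)\<^sup>2)"
    by (intro sum_nonneg) simp
  also have "\<dots> = (m + 2)\<^sup>2 * (\<Sum>i\<in>A. \<Sum>j\<in>A. \<Sum>k\<in>A. (T i j k)\<^sup>2)
      - 2 * (m + 2) * (\<Sum>i\<in>A. \<Sum>j\<in>A. \<Sum>k\<in>A. T i j k * q i j k)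
      + (\<Sum>i\<in>A. \<Sum>j\<in>A. \<Sum>k\<in>A. q i j k * q i j k)"
    by (simp add: power2_eq_square algebra_simps sum.distrib sum_subtractf sum_distrib_left)
  also have "\<dots> = (m + 2) * ((m + 2) * (\<Sum>i\<in>A. \<Sum>j\<in>A. \<Sum>k\<in>A. (T i j k)\<^sup>2) - 3 * (\<Sum>i\<in>A. \<nu> i * \<nu> i))"
    unfolding Tq qq by (simp add: power2_eq_square algebra_simps)
  finally have "0 \<le> (m + 2) * (\<Sum>i\<in>A. \<Sum>j\<in>A. \<Sum>k\<in>A. (T i j k)\<^sup>2) - 3 * (\<Sum>i\<in>A. \<nu> i * \<nu> i)"
    by (simp add: zero_le_mult_iff m_def add_pos_nonneg)
  thus ?thesis unfolding m_def \<nu>_def by (simp add: power2_eq_square)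
qed

definition sff_sectional :: "nat \<Rightarrow> (nat \<Rightarrow> nat \<Rightarrow> nat \<Rightarrow> real) \<Rightarrow> nat \<Rightarrow> nat \<Rightarrow> real" where
  "sff_sectional n s i j = (\<Sum>r\<in>{1..n}. s i i r * s j j r - (s i j r)\<^sup>2)"

definition ricci_excess :: "nat \<Rightarrow> (nat \<Rightarrow> nat \<Rightarrow> nat \<Rightarrow> real) \<Rightarrow> real" where
  "ricci_excess n s = (\<Sum>i\<in>{2..n}. sff_sectional n s 1 i)
      - (real n - 1) * (\<Sum>j\<in>{1..n}. \<Sum>i\<in>{1..<j}. sff_sectional n s i j)
      + (3 * real n - 1) * (real n - 2) / (2 * (3 * real n + 5)) * (\<Sum>r\<in>{1..n}. (\<Sum>i\<in>{1..n}. s i i r)\<^sup>2)"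

definition reduced_excess ::
    "real \<Rightarrow> nat set \<Rightarrow> real \<Rightarrow> real \<Rightarrow> real \<Rightarrow> real \<Rightarrow> (nat \<Rightarrow> real) \<Rightarrow> (nat \<Rightarrow> real) \<Rightarrow> real" where
  "reduced_excess N A x t P S y w =
      (x * t + (\<Sum>a\<in>A. y a * w a) - (\<Sum>a\<in>A. (y a)\<^sup>2) - P)
    - (N - 1) / 2 * ((x + t)\<^sup>2 + (\<Sum>a\<in>A. (y a + w a)\<^sup>2) - (x\<^sup>2 + 3 * (\<Sum>a\<in>A. (y a)\<^sup>2) + 3 * P + S))
    + (3 * N - 1) * (N - 2) / (2 * (3 * N + 5)) * ((x + t)\<^sup>2 + (\<Sum>a\<in>A. (y a + w a)\<^sup>2))"

lemma completed_square_transverse: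
  fixes N y w :: real
  assumes "N > 1"
  shows "y * w - y\<^sup>2 - (N - 1) / 2 * ((y + w)\<^sup>2 - 3 * y\<^sup>2) + (3 * N - 1) * (N - 2) / (2 * (3 * N + 5)) * (y + w)\<^sup>2
     = (N - 2) / (2 * (3 * N + 5) * (N + 1)) * (3 * (N + 1) * y - 2 * w)\<^sup>2 - (N - 1) / 2 * (3 * w\<^sup>2 / (N + 1))"
proof -
  define u where "u = 1 / (3 * N + 5)"
  define z where "z = 1 / (N + 1)"
  have inv: "u * (3 * N + 5) = 1" "z * (N + 1) = 1" using assms by (auto simp: u_def z_def)
  have "(3 * N - 1) * (N - 2) / (2 * (3 * N + 5)) = (3 * N - 1) * (N - 2) * u / 2"
    "(N - 2) / (2 * (3 * N + 5) * (N + 1)) = (N - 2) * u * z / 2" "3 * w\<^sup>2 / (N + 1) = 3 * w\<^sup>2 * z"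
    by (simp_all add: u_def z_def)
  then show ?thesis using inv by algebra
qed

lemma completed_square_axial:
  fixes N x t P :: real
  assumes "N > 1"
  shows "x * t - P - (N - 1) / 2 * ((x + t)\<^sup>2 - x\<^sup>2 - 3 * P) + (3 * N - 1) * (N - 2) / (2 * (3 * N + 5)) * (x + t)\<^sup>2
     = (N - 2) / (2 * (3 * N + 5) * (N - 1)) * ((4 * t - 3 * (N - 1) * x / 2)\<^sup>2 + (N - 1) * (3 * N + 5) * x\<^sup>2 / 4)
       + (3 * N - 5) / 2 * (P - t\<^sup>2 / (N - 1))"
proof -
  define u where "u = 1 / (3 * N + 5)"
  define z where "z = 1 / (N - 1)"
  have inv: "u * (3 * N + 5) = 1" "z * (N - 1) = 1" using assms by (auto simp: u_def z_def)
  have "(3 * N - 1) * (N - 2) / (2 * (3 * N + 5)) = (3 * N - 1) * (N - 2) * u / 2"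
    "(N - 2) / (2 * (3 * N + 5) * (N - 1)) = (N - 2) * u * z / 2" "t\<^sup>2 / (N - 1) = t\<^sup>2 * z"
    by (simp_all add: u_def z_def)
  then show ?thesis using inv by algebra
qed

lemma reduced_excess_sum_of_squares:
  assumes "N > 1"
  shows "reduced_excess N A x t P S y w =
      (N - 2) / (2 * (3 * N + 5) * (N - 1)) * ((4 * t - 3 * (N - 1) * x / 2)\<^sup>2 + (N - 1) * (3 * N + 5) * x\<^sup>2 / 4)
    + (3 * N - 5) / 2 * (P - t\<^sup>2 / (N - 1))
    + (\<Sum>a\<in>A. (N - 2) / (2 * (3 * N + 5) * (N + 1)) * (3 * (N + 1) * y a - 2 * w a)\<^sup>2)
    + (N - 1) / 2 * (S - 3 * (\<Sum>a\<in>A. (w a)\<^sup>2) / (N + 1))"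
proof -
  define C where "C = (3 * N - 1) * (N - 2) / (2 * (3 * N + 5))"
  define transverse where "transverse = (\<lambda>a. y a * w a - (y a)\<^sup>2 - (N - 1) / 2 * ((y a + w a)\<^sup>2 - 3 * (y a)\<^sup>2) + C * (y a + w a)\<^sup>2)"
  have "reduced_excess N A x t P S y w
      = (x * t - P - (N - 1) / 2 * ((x + t)\<^sup>2 - x\<^sup>2 - 3 * P) + C * (x + t)\<^sup>2)
        + (\<Sum>a\<in>A. transverse a) + (N - 1) / 2 * S"
    unfolding reduced_excess_def transverse_def C_def[symmetric]
    by (simp add: sum.distrib sum_subtractf sum_distrib_left algebra_simps)
  also have "(\<Sum>a\<in>A. transverse a) = (\<Sum>a\<in>A. (N - 2) / (2 * (3 * N + 5) * (N + 1)) * (3 * (N + 1) * y a - 2 * w a)\<^sup>2)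
      - (N - 1) / 2 * (3 * (\<Sum>a\<in>A. (w a)\<^sup>2) / (N + 1))"
    unfolding transverse_def C_def completed_square_transverse[OF assms]
    by (simp add: sum_subtractf sum_distrib_left sum_divide_distrib)
  finally show ?thesis
    unfolding C_def completed_square_axial[OF assms] by (simp add: algebra_simps)
qed

lemma reduced_excess_nonneg:
  assumes N: "N \<ge> 3" and tP: "t\<^sup>2 \<le> (N - 1) * P" and wS: "3 * (\<Sum>a\<in>A. (w a)\<^sup>2) \<le> (N + 1) * S"
  shows "reduced_excess N A x t P S y w \<ge> 0"
    and "reduced_excess N A x t P S y w = 0 \<Longrightarrow> x = 0 \<and> P = 0"
proof -
  define F where "F = (N - 2) / (2 * (3 * N + 5) * (N - 1)) * ((4 * t - 3 * (N - 1) * x / 2)\<^sup>2 + (N - 1) * (3 * N + 5) * x\<^sup>2 / 4)"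
  define CS where "CS = (3 * N - 5) / 2 * (P - t\<^sup>2 / (N - 1))"
  define Sq where "Sq = (\<Sum>a\<in>A. (N - 2) / (2 * (3 * N + 5) * (N + 1)) * (3 * (N + 1) * y a - 2 * w a)\<^sup>2)"
  define Tr where "Tr = (N - 1) / 2 * (S - 3 * (\<Sum>a\<in>A. (w a)\<^sup>2) / (N + 1))"
  have split: "reduced_excess N A x t P S y w = F + CS + Sq + Tr"
    unfolding F_def CS_def Sq_def Tr_def using N by (simp add: reduced_excess_sum_of_squares)
  have "F \<ge> 0" unfolding F_def using N by (intro mult_nonneg_nonneg add_nonneg_nonneg) auto
  moreover have "P - t\<^sup>2 / (N - 1) \<ge> 0" using tP N by (simp add: field_simps)
  then have "CS \<ge> 0" unfolding CS_def using N by simp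
  moreover have "Sq \<ge> 0" unfolding Sq_def using N by (intro sum_nonneg mult_nonneg_nonneg) auto
  moreover have "S - 3 * (\<Sum>a\<in>A. (w a)\<^sup>2) / (N + 1) \<ge> 0" using wS N by (simp add: field_simps)
  then have "Tr \<ge> 0" unfolding Tr_def using N by simp
  ultimately show "reduced_excess N A x t P S y w \<ge> 0" unfolding split by simp
  assume "reduced_excess N A x t P S y w = 0"
  with \<open>F \<ge> 0\<close> \<open>CS \<ge> 0\<close> \<open>Sq \<ge> 0\<close> \<open>Tr \<ge> 0\<close> have "F = 0" "CS = 0"
    unfolding split by linarith+
  have "(4 * t - 3 * (N - 1) * x / 2)\<^sup>2 + (N - 1) * (3 * N + 5) * x\<^sup>2 / 4 = 0"
    using \<open>F = 0\<close> N unfolding F_def by simp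
  moreover have "(N - 1) * (3 * N + 5) * x\<^sup>2 / 4 \<ge> 0" using N by simp
  ultimately have "(N - 1) * (3 * N + 5) * x\<^sup>2 / 4 = 0" "(4 * t - 3 * (N - 1) * x / 2)\<^sup>2 = 0"
    by (smt (verit) zero_le_power2)+
  then have "x = 0" "t = 0" using N by auto
  moreover have "P = 0" using \<open>CS = 0\<close> \<open>t = 0\<close> N unfolding CS_def by simp
  ultimately show "x = 0 \<and> P = 0" by simp
qed

lemma sum_split_first:
  fixes g :: "nat \<Rightarrow> real"
  shows "1 \<le> n \<Longrightarrow> (\<Sum>i\<in>{1..n}. g i) = g 1 + (\<Sum>i\<in>{2..n}. g i)"
  by (simp add: sum.atLeast_Suc_atMost numeral_2_eq_2)

lemma symmetric_cubic_sums_split_first: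
  fixes s :: "nat \<Rightarrow> nat \<Rightarrow> nat \<Rightarrow> real"
  assumes n: "n \<ge> 1" and sym12: "\<And>i j k. s i j k = s j i k" and sym23: "\<And>i j k. s i j k = s i k j"
  defines "A \<equiv> {2..n}"
  shows "(\<Sum>i\<in>A. sff_sectional n s 1 i)
     = s 1 1 1 * (\<Sum>a\<in>A. s 1 a a) + (\<Sum>a\<in>A. s 1 1 a * (\<Sum>b\<in>A. s b b a)) - (\<Sum>a\<in>A. (s 1 1 a)\<^sup>2)
       - (\<Sum>a\<in>A. \<Sum>b\<in>A. (s 1 a b)\<^sup>2)"
    and "(\<Sum>r\<in>{1..n}. (\<Sum>i\<in>{1..n}. s i i r)\<^sup>2)
     = (s 1 1 1 + (\<Sum>a\<in>A. s 1 a a))\<^sup>2 + (\<Sum>a\<in>A. (s 1 1 a + (\<Sum>b\<in>A. s b b a))\<^sup>2)"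
    and "(\<Sum>i\<in>{1..n}. \<Sum>j\<in>{1..n}. \<Sum>r\<in>{1..n}. (s i j r)\<^sup>2)
     = (s 1 1 1)\<^sup>2 + 3 * (\<Sum>a\<in>A. (s 1 1 a)\<^sup>2) + 3 * (\<Sum>a\<in>A. \<Sum>b\<in>A. (s 1 a b)\<^sup>2)
       + (\<Sum>a\<in>A. \<Sum>b\<in>A. \<Sum>c\<in>A. (s a b c)\<^sup>2)"
proof -
  have sums_to_first:
    "(\<Sum>x\<in>{2..n}. s (Suc 0) (Suc 0) (Suc 0) * s x x (Suc 0)) = (\<Sum>x\<in>{2..n}. s (Suc 0) (Suc 0) (Suc 0) * s (Suc 0) x x)"
    "(\<Sum>x\<in>{2..n}. (s (Suc 0) x (Suc 0))\<^sup>2) = (\<Sum>x\<in>{2..n}. (s (Suc 0) (Suc 0) x)\<^sup>2)"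
    "(\<Sum>x\<in>{2..n}. s x x (Suc 0)) = (\<Sum>x\<in>{2..n}. s (Suc 0) x x)"
    "(\<Sum>j\<in>{2..n}. (s j (Suc 0) (Suc 0))\<^sup>2) = (\<Sum>j\<in>{2..n}. (s (Suc 0) (Suc 0) j)\<^sup>2)"
    "(\<Sum>i\<in>{2..n}. \<Sum>j\<in>{2..n}. (s i (Suc 0) j)\<^sup>2) = (\<Sum>i\<in>{2..n}. \<Sum>j\<in>{2..n}. (s (Suc 0) i j)\<^sup>2)"
    "(\<Sum>i\<in>{2..n}. \<Sum>j\<in>{2..n}. (s i j (Suc 0))\<^sup>2) = (\<Sum>i\<in>{2..n}. \<Sum>j\<in>{2..n}. (s (Suc 0) i j)\<^sup>2)"
    by (intro sum.cong refl; metis sym12 sym23)+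
  have "(\<Sum>i\<in>A. sff_sectional n s 1 i)
     = (\<Sum>i\<in>A. s 1 1 1 * s 1 i i + (\<Sum>r\<in>A. s 1 1 r * s i i r) - (s 1 1 i)\<^sup>2 - (\<Sum>r\<in>A. (s 1 i r)\<^sup>2))"
    unfolding A_def sff_sectional_def
    by (simp only: sum_split_first[OF n]) (simp add: sums_to_first sum_subtractf sum.distrib)
  also have "\<dots> = s 1 1 1 * (\<Sum>a\<in>A. s 1 a a) + (\<Sum>r\<in>A. \<Sum>i\<in>A. s 1 1 r * s i i r) - (\<Sum>a\<in>A. (s 1 1 a)\<^sup>2)
     - (\<Sum>a\<in>A. \<Sum>b\<in>A. (s 1 a b)\<^sup>2)"
    by (simp add: sum.distrib sum_subtractf sum_distrib_left) (rule sum.swap)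
  finally show "(\<Sum>i\<in>A. sff_sectional n s 1 i)
     = s 1 1 1 * (\<Sum>a\<in>A. s 1 a a) + (\<Sum>a\<in>A. s 1 1 a * (\<Sum>b\<in>A. s b b a)) - (\<Sum>a\<in>A. (s 1 1 a)\<^sup>2)
       - (\<Sum>a\<in>A. \<Sum>b\<in>A. (s 1 a b)\<^sup>2)"
    by (simp add: sum_distrib_left)
  show "(\<Sum>r\<in>{1..n}. (\<Sum>i\<in>{1..n}. s i i r)\<^sup>2)
     = (s 1 1 1 + (\<Sum>a\<in>A. s 1 a a))\<^sup>2 + (\<Sum>a\<in>A. (s 1 1 a + (\<Sum>b\<in>A. s b b a))\<^sup>2)"
    unfolding A_def by (simp only: sum_split_first[OF n]) (simp add: sums_to_first)
  show "(\<Sum>i\<in>{1..n}. \<Sum>j\<in>{1..n}. \<Sum>r\<in>{1..n}. (s i j r)\<^sup>2)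
     = (s 1 1 1)\<^sup>2 + 3 * (\<Sum>a\<in>A. (s 1 1 a)\<^sup>2) + 3 * (\<Sum>a\<in>A. \<Sum>b\<in>A. (s 1 a b)\<^sup>2)
       + (\<Sum>a\<in>A. \<Sum>b\<in>A. \<Sum>c\<in>A. (s a b c)\<^sup>2)"
    unfolding A_def by (simp only: sum_split_first[OF n]) (simp add: sum.distrib sums_to_first)
qed

lemma sum_lower_triangle_sff_sectional:
  fixes s :: "nat \<Rightarrow> nat \<Rightarrow> nat \<Rightarrow> real"
  assumes sym12: "\<And>i j k. s i j k = s j i k"
  shows "(\<Sum>j\<in>{1..n}. \<Sum>i\<in>{1..<j}. sff_sectional n s i j)
    = ((\<Sum>r\<in>{1..n}. (\<Sum>i\<in>{1..n}. s i i r)\<^sup>2) - (\<Sum>i\<in>{1..n}. \<Sum>j\<in>{1..n}. \<Sum>r\<in>{1..n}. (s i j r)\<^sup>2)) / 2"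
proof -
  have sym: "sff_sectional n s i j = sff_sectional n s j i" for i j
    unfolding sff_sectional_def by (intro sum.cong refl) (metis sym12 mult.commute)
  have "(\<Sum>i\<in>{1..n}. \<Sum>j\<in>{1..n}. \<Sum>r\<in>{1..n}. s i i r * s j j r)
      = (\<Sum>r\<in>{1..n}. \<Sum>i\<in>{1..n}. \<Sum>j\<in>{1..n}. s i i r * s j j r)"
    by (rule trans[OF sum.cong[OF refl sum.swap] sum.swap])
  also have "\<dots> = (\<Sum>r\<in>{1..n}. (\<Sum>i\<in>{1..n}. s i i r)\<^sup>2)"
    by (simp add: power2_eq_square sum_product)
  finally show ?thesis
    unfolding sum_lower_triangle_symmetric[of "sff_sectional n s", OF sym]
    by (simp add: sff_sectional_def sum_subtractf power2_eq_square)
qed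

lemma ricci_excess_eq_reduced:
  fixes s :: "nat \<Rightarrow> nat \<Rightarrow> nat \<Rightarrow> real"
  assumes n: "n \<ge> 1" and sym12: "\<And>i j k. s i j k = s j i k" and sym23: "\<And>i j k. s i j k = s i k j"
  defines "A \<equiv> {2..n}"
  shows "ricci_excess n s = reduced_excess (real n) A (s 1 1 1) (\<Sum>a\<in>A. s 1 a a)
    (\<Sum>a\<in>A. \<Sum>b\<in>A. (s 1 a b)\<^sup>2) (\<Sum>a\<in>A. \<Sum>b\<in>A. \<Sum>c\<in>A. (s a b c)\<^sup>2) (\<lambda>a. s 1 1 a) (\<lambda>a. \<Sum>b\<in>A. s b b a)"
proof -
  define t where "t = (\<Sum>a\<in>A. s 1 a a)"
  define P where "P = (\<Sum>a\<in>A. \<Sum>b\<in>A. (s 1 a b)\<^sup>2)"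
  define S where "S = (\<Sum>a\<in>A. \<Sum>b\<in>A. \<Sum>c\<in>A. (s a b c)\<^sup>2)"
  define yw where "yw = (\<Sum>a\<in>A. s 1 1 a * (\<Sum>b\<in>A. s b b a))"
  define yy where "yy = (\<Sum>a\<in>A. (s 1 1 a)\<^sup>2)"
  define ypw where "ypw = (\<Sum>a\<in>A. (s 1 1 a + (\<Sum>b\<in>A. s b b a))\<^sup>2)"
  have "ricci_excess n s = (s 1 1 1 * t + yw - yy - P)
      - (real n - 1) * (((s 1 1 1 + t)\<^sup>2 + ypw - ((s 1 1 1)\<^sup>2 + 3 * yy + 3 * P + S)) / 2)
      + (3 * real n - 1) * (real n - 2) / (2 * (3 * real n + 5)) * ((s 1 1 1 + t)\<^sup>2 + ypw)"
    unfolding ricci_excess_def sum_lower_triangle_sff_sectional[OF sym12]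
      symmetric_cubic_sums_split_first[OF n sym12 sym23] t_def P_def S_def yw_def yy_def ypw_def A_def
    by (rule refl)
  also have "\<dots> = reduced_excess (real n) A (s 1 1 1) t P S (\<lambda>a. s 1 1 a) (\<lambda>a. \<Sum>b\<in>A. s b b a)"
    unfolding reduced_excess_def yw_def yy_def ypw_def by simp
  finally show ?thesis unfolding t_def P_def S_def .
qed

lemma ricci_excess_nonneg:
  fixes s :: "nat \<Rightarrow> nat \<Rightarrow> nat \<Rightarrow> real"
  assumes n: "n \<ge> 3" and sym12: "\<And>i j k. s i j k = s j i k" and sym23: "\<And>i j k. s i j k = s i k j"
  shows "ricci_excess n s \<ge> 0"
    and "ricci_excess n s = 0 \<Longrightarrow> s 1 1 1 = 0 \<and> (\<forall>a\<in>{2..n}. \<forall>b\<in>{2..n}. s 1 a b = 0)"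
proof -
  define A where "A = {2..n}"
  define P where "P = (\<Sum>a\<in>A. \<Sum>b\<in>A. (s 1 a b)\<^sup>2)"
  have card_A: "real (card A) = real n - 1" unfolding A_def using n by simp
  have "(\<Sum>a\<in>A. s 1 a a)\<^sup>2 \<le> (\<Sum>a\<in>A. (s 1 a a)\<^sup>2) * real (card A)"
    by (rule sum_squared_le_sum_of_squares)
  also have "\<dots> \<le> P * (real n - 1)" unfolding card_A P_def using n
    by (intro mult_right_mono sum_mono member_le_sum) (auto simp: A_def)
  finally have tP: "(\<Sum>a\<in>A. s 1 a a)\<^sup>2 \<le> (real n - 1) * P" by (simp add: mult.commute)
  have wS: "3 * (\<Sum>a\<in>A. (\<Sum>b\<in>A. s b b a)\<^sup>2) \<le> (real n + 1) * (\<Sum>a\<in>A. \<Sum>b\<in>A. \<Sum>c\<in>A. (s a b c)\<^sup>2)"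
    using trace_square_le_symmetric_tensor_norm[OF _ sym12 sym23, of A] card_A
    by (simp add: A_def add.commute)
  have "real n \<ge> 3" using n by simp
  note reduced = reduced_excess_nonneg[OF this tP wS, of "s 1 1 1" "\<lambda>a. s 1 1 a"]
  have excess: "ricci_excess n s = reduced_excess (real n) A (s 1 1 1) (\<Sum>a\<in>A. s 1 a a) P
      (\<Sum>a\<in>A. \<Sum>b\<in>A. \<Sum>c\<in>A. (s a b c)\<^sup>2) (\<lambda>a. s 1 1 a) (\<lambda>a. \<Sum>b\<in>A. s b b a)"
    unfolding A_def P_def using n by (intro ricci_excess_eq_reduced sym12 sym23) simp
  show "ricci_excess n s \<ge> 0" unfolding excess by (rule reduced(1))
  assume "ricci_excess n s = 0"
  then have "s 1 1 1 = 0 \<and> P = 0" unfolding excess by (rule reduced(2))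
  then show "s 1 1 1 = 0 \<and> (\<forall>a\<in>{2..n}. \<forall>b\<in>{2..n}. s 1 a b = 0)"
    unfolding P_def A_def by (simp add: sum_nonneg_eq_0_iff sum_nonneg)
qed

section \<open>Sectional curvatures of a QCH curvature tensor on totally real planes\<close>

text \<open>With \<open>\<eta> i = \<eta>(e\<^sub>i)\<close> and \<open>\<zeta> i = \<eta>~(e\<^sub>i)\<close>, this is \<open>(a\<pi> + b\<Phi> + c\<Psi>)(e\<^sub>i, e\<^sub>j, e\<^sub>j, e\<^sub>i)\<close> for
  orthonormal \<open>e\<^sub>i, e\<^sub>j\<close> with \<open>J e\<^sub>i \<perp> e\<^sub>j\<close>.\<close>
definition qch_sectional ::
    "real \<Rightarrow> real \<Rightarrow> real \<Rightarrow> (nat \<Rightarrow> real) \<Rightarrow> (nat \<Rightarrow> real) \<Rightarrow> nat \<Rightarrow> nat \<Rightarrow> real" where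
  "qch_sectional a b c \<eta> \<zeta> i j = a / 4 + b / 8 * ((\<eta> i)\<^sup>2 + (\<zeta> i)\<^sup>2 + (\<eta> j)\<^sup>2 + (\<zeta> j)\<^sup>2)
     + c * (\<eta> j * \<zeta> i - \<eta> i * \<zeta> j)\<^sup>2"

lemma sum_qch_sectional_first:
  assumes n: "n \<ge> 1" and unit: "(\<Sum>i\<in>{1..n}. (\<eta> i)\<^sup>2 + (\<zeta> i)\<^sup>2) = 1"
  shows "(\<Sum>i\<in>{2..n}. qch_sectional a b c \<eta> \<zeta> 1 i)
    = (real n - 1) * a / 4 + b / 8 * ((real n - 2) * ((\<eta> 1)\<^sup>2 + (\<zeta> 1)\<^sup>2) + 1)
      + c * (\<Sum>i\<in>{1..n}. (\<eta> 1 * \<zeta> i - \<zeta> 1 * \<eta> i)\<^sup>2)"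
proof -
  have rest: "(\<Sum>i\<in>{2..n}. (\<eta> i)\<^sup>2 + (\<zeta> i)\<^sup>2) = 1 - ((\<eta> 1)\<^sup>2 + (\<zeta> 1)\<^sup>2)"
    using unit sum_split_first[OF n] by simp
  have cross: "(\<Sum>i\<in>{2..n}. (\<eta> i * \<zeta> 1 - \<eta> 1 * \<zeta> i)\<^sup>2) = (\<Sum>i\<in>{1..n}. (\<eta> 1 * \<zeta> i - \<zeta> 1 * \<eta> i)\<^sup>2)"
    using sum_split_first[OF n, of "\<lambda>i. (\<eta> 1 * \<zeta> i - \<zeta> 1 * \<eta> i)\<^sup>2"]
    by (simp add: power2_eq_square algebra_simps)
  have "(\<Sum>i\<in>{2..n}. qch_sectional a b c \<eta> \<zeta> 1 i)
      = (\<Sum>i\<in>{2..n}. (a / 4 + b / 8 * ((\<eta> 1)\<^sup>2 + (\<zeta> 1)\<^sup>2)) + b / 8 * ((\<eta> i)\<^sup>2 + (\<zeta> i)\<^sup>2)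
           + c * (\<eta> i * \<zeta> 1 - \<eta> 1 * \<zeta> i)\<^sup>2)"
    by (intro sum.cong refl) (simp add: qch_sectional_def algebra_simps)
  also have "\<dots> = real (card {2..n}) * (a / 4 + b / 8 * ((\<eta> 1)\<^sup>2 + (\<zeta> 1)\<^sup>2))
      + b / 8 * (\<Sum>i\<in>{2..n}. (\<eta> i)\<^sup>2 + (\<zeta> i)\<^sup>2) + c * (\<Sum>i\<in>{2..n}. (\<eta> i * \<zeta> 1 - \<eta> 1 * \<zeta> i)\<^sup>2)"
    by (simp only: sum.distrib sum_distrib_left[symmetric] sum_constant) (simp add: algebra_simps)
  finally show ?thesis unfolding rest cross using n by (simp add: field_simps)
qed

lemma sum_qch_sectional_pairs:
  assumes unit: "(\<Sum>i\<in>{1..n}. (\<eta> i)\<^sup>2 + (\<zeta> i)\<^sup>2) = 1"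
  shows "(\<Sum>j\<in>{1..n}. \<Sum>i\<in>{1..<j}. qch_sectional a b c \<eta> \<zeta> i j)
    = real n * (real n - 1) * a / 8 + (real n - 1) * b / 8
      + c * ((\<Sum>i\<in>{1..n}. (\<eta> i)\<^sup>2) * (\<Sum>i\<in>{1..n}. (\<zeta> i)\<^sup>2) - (\<Sum>i\<in>{1..n}. \<eta> i * \<zeta> i)\<^sup>2)"
proof -
  define \<alpha> where "\<alpha> i = (\<eta> i)\<^sup>2 + (\<zeta> i)\<^sup>2" for i
  have sym: "qch_sectional a b c \<eta> \<zeta> i j = qch_sectional a b c \<eta> \<zeta> j i" for i j
    unfolding qch_sectional_def by (simp add: power2_eq_square algebra_simps)
  have "(\<Sum>i\<in>{1..n}. \<Sum>j\<in>{1..n}. qch_sectional a b c \<eta> \<zeta> i j)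
      = (\<Sum>i\<in>{1..n}. \<Sum>j\<in>{1..n}. a / 4 + b / 8 * \<alpha> i + b / 8 * \<alpha> j + c * (\<eta> j * \<zeta> i - \<eta> i * \<zeta> j)\<^sup>2)"
    unfolding qch_sectional_def \<alpha>_def by (intro sum.cong refl) (simp add: algebra_simps)
  also have "\<dots> = real (card {1..n}) * real (card {1..n}) * (a / 4) + real (card {1..n}) * (b / 8 * (\<Sum>i\<in>{1..n}. \<alpha> i))
      + real (card {1..n}) * (b / 8 * (\<Sum>i\<in>{1..n}. \<alpha> i))
      + c * (\<Sum>i\<in>{1..n}. \<Sum>j\<in>{1..n}. (\<eta> j * \<zeta> i - \<eta> i * \<zeta> j)\<^sup>2)"
    by (simp only: sum.distrib sum_constant sum_distrib_left[symmetric])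
  finally have all: "(\<Sum>i\<in>{1..n}. \<Sum>j\<in>{1..n}. qch_sectional a b c \<eta> \<zeta> i j)
      = real n * real n * a / 4 + real n * b / 4
        + 2 * c * ((\<Sum>i\<in>{1..n}. (\<eta> i)\<^sup>2) * (\<Sum>i\<in>{1..n}. (\<zeta> i)\<^sup>2) - (\<Sum>i\<in>{1..n}. \<eta> i * \<zeta> i)\<^sup>2)"
    using unit unfolding lagrange_identity \<alpha>_def by (simp add: algebra_simps)
  have "(\<Sum>i\<in>{1..n}. qch_sectional a b c \<eta> \<zeta> i i) = (\<Sum>i\<in>{1..n}. a / 4 + b / 4 * \<alpha> i)"
    unfolding qch_sectional_def \<alpha>_def by (intro sum.cong refl) (simp add: algebra_simps)
  also have "\<dots> = real (card {1..n}) * (a / 4) + b / 4 * (\<Sum>i\<in>{1..n}. \<alpha> i)"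
    by (simp only: sum.distrib sum_constant sum_distrib_left[symmetric])
  finally have diag: "(\<Sum>i\<in>{1..n}. qch_sectional a b c \<eta> \<zeta> i i) = real n * a / 4 + b / 4"
    using unit unfolding \<alpha>_def by simp
  show ?thesis
    unfolding sum_lower_triangle_symmetric[of "qch_sectional a b c \<eta> \<zeta>", OF sym] all diag
    by (simp add: field_simps)
qed

section \<open>Lagrangian submanifolds of Kaehler QCH manifolds\<close>

locale lagrangian_qch =
  fixes n :: nat
    and J :: "'a::euclidean_space \<Rightarrow> 'a"
    and xi :: 'a
    and a b c :: real
    and Rbar RN :: "'a \<Rightarrow> 'a \<Rightarrow> 'a \<Rightarrow> 'a \<Rightarrow> real"
    and T :: "'a set"
    and h :: "'a \<Rightarrow> 'a \<Rightarrow> 'a"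
  assumes n3: "n \<ge> 3"
    and J_lin: "linear J"
    and J_sq: "\<And>v. J (J v) = - v"
    and J_isom: "\<And>u v. inner (J u) (J v) = inner u v"
    and xi_unit: "norm xi = 1"
    and QCH: "\<And>X Y Z U. Rbar X Y Z U =
               a * piT J X Y Z U + b * PhiT J xi X Y Z U + c * PsiT J xi X Y Z U"
    and T_sub: "subspace T"
    and Lagr: "J ` T = {v. \<forall>w\<in>T. inner v w = 0}"
    and h_sym: "\<And>x y. x \<in> T \<Longrightarrow> y \<in> T \<Longrightarrow> h x y = h y x"
    and h_add: "\<And>x y z. x \<in> T \<Longrightarrow> y \<in> T \<Longrightarrow> z \<in> T \<Longrightarrow> h (x + y) z = h x z + h y z"
    and h_scale: "\<And>r x z. x \<in> T \<Longrightarrow> z \<in> T \<Longrightarrow> h (r *\<^sub>R x) z = r *\<^sub>R h x z"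
    and h_normal: "\<And>x y w. x \<in> T \<Longrightarrow> y \<in> T \<Longrightarrow> w \<in> T \<Longrightarrow> inner (h x y) w = 0"
    and h_Kaehler: "\<And>x y z. x \<in> T \<Longrightarrow> y \<in> T \<Longrightarrow> z \<in> T \<Longrightarrow>
                      inner (h x y) (J z) = inner (h x z) (J y)"
    and Gauss: "\<And>X Y Z U. X \<in> T \<Longrightarrow> Y \<in> T \<Longrightarrow> Z \<in> T \<Longrightarrow> U \<in> T \<Longrightarrow>
                  RN X Y Z U = Rbar X Y Z U + inner (h X U) (h Y Z) - inner (h X Z) (h Y U)"
begin

lemma J_tangent_orthogonal: "x \<in> T \<Longrightarrow> y \<in> T \<Longrightarrow> inner (J x) y = 0"
  using Lagr by blast

lemma normal_in_J_image:
  assumes "\<And>w. w \<in> T \<Longrightarrow> inner v w = 0"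
  obtains w where "w \<in> T" "v = J w"
proof -
  have "v \<in> J ` T" unfolding Lagr using assms by blast
  then show ?thesis using that by blast
qed

lemma onb_in: "onb T n e \<Longrightarrow> i \<in> {1..n} \<Longrightarrow> e i \<in> T"
  unfolding onb_def by (metis imageI span_base)

lemma onb_inner: "onb T n e \<Longrightarrow> i \<in> {1..n} \<Longrightarrow> j \<in> {1..n} \<Longrightarrow> inner (e i) (e j) = (if i = j then 1 else 0)"
  unfolding onb_def by blast

lemma onb_first_unit:
  assumes "onb T n e"
  shows "e 1 \<in> T" and "norm (e 1) = 1"
proof -
  have one: "1 \<in> {1..n}" using n3 by simp
  show "e 1 \<in> T" using onb_in[OF assms one] .
  show "norm (e 1) = 1" using onb_inner[OF assms one one] by (simp add: norm_eq_sqrt_inner)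
qed

lemma inner_onb_comb: "onb T n e \<Longrightarrow> j \<in> {1..n} \<Longrightarrow> inner (\<Sum>i\<in>{1..n}. f i *\<^sub>R e i) (e j) = f j"
  by (simp add: inner_sum_left onb_inner if_distrib cong: if_cong)

lemma onb_comb_in: "onb T n e \<Longrightarrow> (\<Sum>i\<in>{1..n}. f i *\<^sub>R e i) \<in> T"
  using T_sub onb_in by (intro subspace_sum subspace_scale) auto

lemma onb_expansion:
  assumes o: "onb T n e" and w: "w \<in> T"
  shows "w = (\<Sum>i\<in>{1..n}. inner w (e i) *\<^sub>R e i)"
proof -
  define p where "p = w - (\<Sum>i\<in>{1..n}. inner w (e i) *\<^sub>R e i)"
  have "p \<in> span (e ` {1..n})" using o w onb_comb_in[OF o] T_sub unfolding p_def onb_def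
    by (metis span_diff)
  moreover have "orthogonal p x" if "x \<in> e ` {1..n}" for x
    using that inner_onb_comb[OF o] by (auto simp: orthogonal_def p_def inner_diff_left)
  ultimately have "orthogonal p p" using orthogonal_to_span by blast
  then show ?thesis unfolding p_def by (simp add: orthogonal_def)
qed

lemma inner_onb_expansion: "onb T n e \<Longrightarrow> w \<in> T \<Longrightarrow> inner w v = (\<Sum>i\<in>{1..n}. inner w (e i) * inner (e i) v)"
  by (subst onb_expansion, assumption+) (simp add: inner_sum_left)

lemma inner_onb_combs:
  "onb T n e \<Longrightarrow> inner (\<Sum>i\<in>{1..n}. f i *\<^sub>R e i) (\<Sum>i\<in>{1..n}. g i *\<^sub>R e i) = (\<Sum>i\<in>{1..n}. f i * g i)"
proof -
  assume o: "onb T n e"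
  have "inner (\<Sum>i\<in>{1..n}. f i *\<^sub>R e i) (\<Sum>i\<in>{1..n}. g i *\<^sub>R e i)
      = (\<Sum>j\<in>{1..n}. g j * inner (\<Sum>i\<in>{1..n}. f i *\<^sub>R e i) (e j))"
    by (simp add: inner_sum_right)
  also have "\<dots> = (\<Sum>j\<in>{1..n}. f j * g j)" using inner_onb_comb[OF o] by (simp add: mult.commute)
  finally show ?thesis .
qed

lemma norm_onb_comb:
  assumes "onb T n e"
  shows "(norm (\<Sum>i\<in>{1..n}. f i *\<^sub>R e i))\<^sup>2 = (\<Sum>i\<in>{1..n}. (f i)\<^sup>2)"
  unfolding power2_norm_eq_inner using inner_onb_combs[OF assms] by (simp add: power2_eq_square)

lemma onb_exists:
  assumes "dim T = n"
  obtains e where "onb T n e"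
proof -
  obtain B where B: "B \<subseteq> T" "pairwise orthogonal B" "\<And>x. x \<in> B \<Longrightarrow> norm x = 1"
    "independent B" "card B = dim T" "span B = T"
    by (rule orthonormal_basis_subspace[OF T_sub]) auto
  have "card B = n" using B(5) assms by simp
  moreover have "finite B" using calculation n3 card_gt_0_iff by fastforce
  ultimately obtain f where f: "bij_betw f {1..n} B" using ex_bij_betw_nat_finite_1 by metis
  have "inner (f i) (f j) = (if i = j then 1 else 0)" if "i \<in> {1..n}" "j \<in> {1..n}" for i j
  proof (cases "i = j")
    case True
    then show ?thesis using B(3) f that by (simp add: bij_betwE norm_eq_1)
  next
    case False
    then have "f i \<noteq> f j" using f that by (metis bij_betw_inv_into_left)
    then show ?thesis using B(2) f that False by (auto simp: pairwise_def orthogonal_def bij_betwE)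
  qed
  moreover have "span (f ` {1..n}) = T" using f B(6) by (simp add: bij_betw_def)
  ultimately show ?thesis using that onb_def by blast
qed

lemma onb_transpose:
  assumes o: "onb T n e" and k: "k \<in> {1..n}"
  shows "onb T n (e \<circ> Transposition.transpose 1 k)"
proof -
  have perm: "Transposition.transpose 1 k ` {1..n} = {1..n}" using k by simp
  then have in_range: "Transposition.transpose 1 k i \<in> {1..n}" if "i \<in> {1..n}" for i using that by blast
  show ?thesis unfolding onb_def
  proof (intro conjI ballI)
    fix i j assume "i \<in> {1..n}" "j \<in> {1..n}"
    then show "inner ((e \<circ> Transposition.transpose 1 k) i) ((e \<circ> Transposition.transpose 1 k) j) = (if i = j then 1 else 0)"
      using onb_inner[OF o in_range in_range] by (simp add: transpose_eq_iff) blast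
  next
    have "(e \<circ> Transposition.transpose 1 k) ` {1..n} = e ` {1..n}" by (metis image_comp perm)
    then show "span ((e \<circ> Transposition.transpose 1 k) ` {1..n}) = T"
      using o by (simp add: onb_def)
  qed
qed

lemma h_onb_comb_left:
  assumes o: "onb T n e" and y: "y \<in> T" and I: "I \<subseteq> {1..n}"
  shows "h (\<Sum>i\<in>I. f i *\<^sub>R e i) y = (\<Sum>i\<in>I. f i *\<^sub>R h (e i) y)"
proof -
  have "finite I" using I finite_subset by blast
  then show ?thesis using I
  proof (induction I rule: finite_induct)
    case empty
    have "h (0 *\<^sub>R y) y = 0 *\<^sub>R h y y" by (rule h_scale[OF y y])
    then show ?case by simp
  next
    case (insert i F)
    have ei: "e i \<in> T" using insert.prems onb_in[OF o] by auto
    have "(\<Sum>j\<in>F. f j *\<^sub>R e j) \<in> T"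
      using insert.prems onb_in[OF o] T_sub by (intro subspace_sum subspace_scale) auto
    moreover have "f i *\<^sub>R e i \<in> T" using ei T_sub by (simp add: subspace_scale)
    ultimately show ?case
      using insert h_add[OF _ _ y] h_scale[OF ei y] by simp
  qed
qed

definition sff_coeff :: "(nat \<Rightarrow> 'a) \<Rightarrow> nat \<Rightarrow> nat \<Rightarrow> nat \<Rightarrow> real" where
  "sff_coeff e i j k =
     (if i \<in> {1..n} \<and> j \<in> {1..n} \<and> k \<in> {1..n} then inner (h (e i) (e j)) (J (e k)) else 0)"

lemma sff_coeff_swap12: "onb T n e \<Longrightarrow> sff_coeff e i j k = sff_coeff e j i k"
  unfolding sff_coeff_def using h_sym onb_in by auto

lemma sff_coeff_swap23: "onb T n e \<Longrightarrow> sff_coeff e i j k = sff_coeff e i k j"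
  unfolding sff_coeff_def using h_Kaehler onb_in by auto

lemma sff_coeff_transpose:
  assumes "k \<in> {1..n}" "i \<in> {1..n}" "j \<in> {1..n}" "l \<in> {1..n}"
  shows "sff_coeff (e \<circ> Transposition.transpose 1 k) i j l
    = sff_coeff e (Transposition.transpose 1 k i) (Transposition.transpose 1 k j) (Transposition.transpose 1 k l)"
proof -
  have "Transposition.transpose 1 k ` {1..n} = {1..n}" using assms(1) by simp
  then have "Transposition.transpose 1 k m \<in> {1..n}" if "m \<in> {1..n}" for m using that by blast
  then show ?thesis using assms unfolding sff_coeff_def by simp
qed

lemma h_onb_eq_J:
  assumes o: "onb T n e" and "i \<in> {1..n}" "j \<in> {1..n}"
  obtains w where "w \<in> T" "h (e i) (e j) = J w" "\<And>r. r \<in> {1..n} \<Longrightarrow> inner w (e r) = sff_coeff e i j r"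
proof -
  obtain w where w: "w \<in> T" "h (e i) (e j) = J w"
    using normal_in_J_image h_normal onb_in[OF o] assms by metis
  moreover have "inner w (e r) = sff_coeff e i j r" if "r \<in> {1..n}" for r
    using that assms w(2) J_isom unfolding sff_coeff_def by simp
  ultimately show ?thesis using that[of w] by blast
qed

lemma inner_h_onb:
  assumes o: "onb T n e" and ij: "i \<in> {1..n}" "j \<in> {1..n}" and kl: "k \<in> {1..n}" "l \<in> {1..n}"
  shows "inner (h (e i) (e j)) (h (e k) (e l)) = (\<Sum>r\<in>{1..n}. sff_coeff e i j r * sff_coeff e k l r)"
proof -
  obtain w where w: "w \<in> T" "h (e i) (e j) = J w" "\<And>r. r \<in> {1..n} \<Longrightarrow> inner w (e r) = sff_coeff e i j r"
    using h_onb_eq_J[OF o ij] by blast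
  obtain w' where w': "w' \<in> T" "h (e k) (e l) = J w'" "\<And>r. r \<in> {1..n} \<Longrightarrow> inner w' (e r) = sff_coeff e k l r"
    using h_onb_eq_J[OF o kl] by blast
  have "inner (h (e i) (e j)) (h (e k) (e l)) = inner w w'" unfolding w(2) w'(2) by (rule J_isom)
  also have "\<dots> = (\<Sum>r\<in>{1..n}. inner w (e r) * inner (e r) w')" by (rule inner_onb_expansion[OF o w(1)])
  also have "\<dots> = (\<Sum>r\<in>{1..n}. sff_coeff e i j r * sff_coeff e k l r)"
    by (intro sum.cong refl) (metis w(3) w'(3) inner_commute)
  finally show ?thesis .
qed

lemma h_eq_0_if_sff_coeff_eq_0:
  assumes o: "onb T n e"
    and zero: "\<And>i j l. i \<in> {1..n} \<Longrightarrow> j \<in> {1..n} \<Longrightarrow> l \<in> {1..n} \<Longrightarrow> sff_coeff e i j l = 0"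
    and x: "x \<in> T" and y: "y \<in> T"
  shows "h x y = 0"
proof -
  have h_frame: "h (e i) (e j) = 0" if ij: "i \<in> {1..n}" "j \<in> {1..n}" for i j
  proof -
    obtain w where w: "w \<in> T" "h (e i) (e j) = J w" "\<And>r. r \<in> {1..n} \<Longrightarrow> inner w (e r) = sff_coeff e i j r"
      using h_onb_eq_J[OF o ij] by blast
    have "w = (\<Sum>r\<in>{1..n}. inner w (e r) *\<^sub>R e r)" by (rule onb_expansion[OF o w(1)])
    also have "\<dots> = 0" using w(3) zero[OF ij] by simp
    finally show ?thesis using w(2) J_lin by (simp add: linear_0)
  qed
  have "h (e i) y = 0" if i: "i \<in> {1..n}" for i
  proof -
    have "h (e i) y = h (\<Sum>j\<in>{1..n}. inner y (e j) *\<^sub>R e j) (e i)"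
      using h_sym onb_in[OF o i] y onb_expansion[OF o y] by metis
    also have "\<dots> = (\<Sum>j\<in>{1..n}. inner y (e j) *\<^sub>R h (e j) (e i))"
      by (rule h_onb_comb_left[OF o onb_in[OF o i]]) simp
    finally show ?thesis using h_frame i by simp
  qed
  then have "(\<Sum>i\<in>{1..n}. inner x (e i) *\<^sub>R h (e i) y) = 0" by simp
  then show ?thesis using h_onb_comb_left[OF o y order_refl] onb_expansion[OF o x] by metis
qed

text \<open>The tangential components of \<open>\<xi>\<close> and \<open>J \<xi>\<close> exhaust \<open>\<xi>\<close>: the normal part of \<open>\<xi>\<close>
  is \<open>J u\<close> with \<open>u\<close> tangent, and \<open>u\<close> is, up to sign, the tangential part of \<open>J \<xi>\<close>.\<close>
lemma sum_tangential_xi_components: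
  assumes o: "onb T n e"
  shows "(\<Sum>i\<in>{1..n}. (inner xi (e i))\<^sup>2 + (inner (J xi) (e i))\<^sup>2) = 1"
proof -
  define q where "q = tproj n e xi"
  have qT: "q \<in> T" unfolding q_def tproj_def by (rule onb_comb_in[OF o])
  have "inner (xi - q) w = 0" if w: "w \<in> T" for w
  proof -
    have "inner q w = (\<Sum>i\<in>{1..n}. inner xi (e i) * inner (e i) w)"
      unfolding q_def tproj_def by (simp add: inner_sum_left)
    also have "\<dots> = inner xi w"
      using inner_onb_expansion[OF o w, of xi] by (simp add: inner_commute mult.commute)
    finally show ?thesis by (simp add: inner_diff_left)
  qed
  then obtain u where u: "u \<in> T" "xi - q = J u" using normal_in_J_image by metis
  have xi_split: "xi = J u + q" using u(2) by (simp add: diff_eq_eq)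
  have "1 = (norm (J u))\<^sup>2 + (norm q)\<^sup>2"
    using norm_add_Pythagorean[of "J u" q] J_tangent_orthogonal[OF u(1) qT] xi_unit xi_split
    by (simp add: orthogonal_def)
  also have "(norm (J u))\<^sup>2 = (\<Sum>i\<in>{1..n}. inner u (e i) * inner (e i) u)"
    unfolding power2_norm_eq_inner J_isom by (rule inner_onb_expansion[OF o u(1)])
  also have "\<dots> = (\<Sum>i\<in>{1..n}. (inner (J xi) (e i))\<^sup>2)"
  proof (intro sum.cong refl)
    fix i assume i: "i \<in> {1..n}"
    have "J xi = J (J u) + J q" using xi_split J_lin by (simp add: linear_add)
    then have "inner (J xi) (e i) = - inner u (e i)"
      using J_tangent_orthogonal[OF qT onb_in[OF o i]] J_sq by (simp add: inner_diff_left)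
    then show "inner u (e i) * inner (e i) u = (inner (J xi) (e i))\<^sup>2"
      by (simp add: power2_eq_square inner_commute)
  qed
  also have "(norm q)\<^sup>2 = (\<Sum>i\<in>{1..n}. (inner xi (e i))\<^sup>2)"
    unfolding q_def tproj_def by (rule norm_onb_comb[OF o])
  finally show ?thesis by (simp add: sum.distrib)
qed

lemma sectional_curvature_onb:
  assumes o: "onb T n e" and ij: "i \<in> {1..n}" "j \<in> {1..n}" "i \<noteq> j"
  shows "RN (e i) (e j) (e j) (e i)
    = qch_sectional a b c (\<lambda>i. inner xi (e i)) (\<lambda>i. inner (J xi) (e i)) i j + sff_sectional n (sff_coeff e) i j"
proof -
  have ei: "e i \<in> T" and ej: "e j \<in> T" using onb_in[OF o] ij by auto
  have frame: "inner (e i) (e i) = 1" "inner (e j) (e j) = 1" "inner (e i) (e j) = 0" "inner (e j) (e i) = 0"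
    using onb_inner[OF o] ij by auto
  have totally_real: "inner (J (e i)) (e j) = 0" "inner (J (e j)) (e i) = 0"
      "inner (J (e i)) (e i) = 0" "inner (J (e j)) (e j) = 0"
    using J_tangent_orthogonal ei ej by auto
  have "inner (h (e i) (e i)) (h (e j) (e j)) - inner (h (e i) (e j)) (h (e j) (e i)) = sff_sectional n (sff_coeff e) i j"
    using inner_h_onb[OF o ij(1,1,2,2)] inner_h_onb[OF o ij(1,2,2,1)] sff_coeff_swap12[OF o, of j i]
    by (simp add: sff_sectional_def sum_subtractf power2_eq_square)
  then show ?thesis
    unfolding Gauss[OF ei ej ej ei] QCH piT_def PhiT_def PsiT_def qch_sectional_def Let_def
    by (simp add: frame totally_real power2_eq_square algebra_simps)
qed

definition ricci_lower_bound :: "(nat \<Rightarrow> 'a) \<Rightarrow> real" where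
  "ricci_lower_bound e =
     (let X = e 1; etaT = tproj n e xi; etT = tproj n e (J xi) in
        - (real (n - 2) * real (n - 1) * real (n + 1) / 8) * a
        - (real (n - 2) / 8) * (real n - ((inner xi X)\<^sup>2 + (inner (J xi) X)\<^sup>2)) * b
        - ((real n - 1) * ((norm etaT)\<^sup>2 * (norm etT)\<^sup>2 - (inner etaT etT)\<^sup>2)
           - (norm (inner xi X *\<^sub>R etT - inner (J xi) X *\<^sub>R etaT))\<^sup>2) * c
        + (real n - 1) * tauB RN n e
        - (real (3 * n - 1) * real (n - 2) * (real n)\<^sup>2 / (2 * real (3 * n + 5)))
            * (norm (meanH h n e))\<^sup>2)"

lemma norm_meanH_onb:
  assumes o: "onb T n e"
  shows "(norm (meanH h n e))\<^sup>2 = (\<Sum>r\<in>{1..n}. (\<Sum>i\<in>{1..n}. sff_coeff e i i r)\<^sup>2) / (real n)\<^sup>2"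
proof -
  have "(norm (\<Sum>i\<in>{1..n}. h (e i) (e i)))\<^sup>2
      = (\<Sum>i\<in>{1..n}. \<Sum>j\<in>{1..n}. inner (h (e i) (e i)) (h (e j) (e j)))"
    by (simp add: power2_norm_eq_inner inner_sum_left inner_sum_right) (rule sum.swap)
  also have "\<dots> = (\<Sum>i\<in>{1..n}. \<Sum>j\<in>{1..n}. \<Sum>r\<in>{1..n}. sff_coeff e i i r * sff_coeff e j j r)"
    by (intro sum.cong refl inner_h_onb[OF o]) auto
  also have "\<dots> = (\<Sum>r\<in>{1..n}. \<Sum>i\<in>{1..n}. \<Sum>j\<in>{1..n}. sff_coeff e i i r * sff_coeff e j j r)"
    by (rule trans[OF sum.cong[OF refl sum.swap] sum.swap])
  also have "\<dots> = (\<Sum>r\<in>{1..n}. (\<Sum>i\<in>{1..n}. sff_coeff e i i r)\<^sup>2)"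
    by (simp add: power2_eq_square sum_product)
  finally show ?thesis unfolding meanH_def by (simp add: power_divide)
qed

lemma RicB_minus_ricci_lower_bound:
  assumes o: "onb T n e"
  shows "RicB RN n e - ricci_lower_bound e = ricci_excess n (sff_coeff e)"
proof -
  define \<eta> where "\<eta> = (\<lambda>i. inner xi (e i))"
  define \<zeta> where "\<zeta> = (\<lambda>i. inner (J xi) (e i))"
  define s where "s = sff_coeff e"
  have n: "n \<ge> 1" "real n \<noteq> 0" using n3 by auto
  have unit: "(\<Sum>i\<in>{1..n}. (\<eta> i)\<^sup>2 + (\<zeta> i)\<^sup>2) = 1"
    unfolding \<eta>_def \<zeta>_def by (rule sum_tangential_xi_components[OF o])
  have K: "RN (e i) (e j) (e j) (e i) = qch_sectional a b c \<eta> \<zeta> i j + sff_sectional n s i j"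
    if "i \<in> {1..n}" "j \<in> {1..n}" "i \<noteq> j" for i j
    unfolding \<eta>_def \<zeta>_def s_def by (rule sectional_curvature_onb[OF o that])
  have Ric: "RicB RN n e = (\<Sum>i\<in>{2..n}. qch_sectional a b c \<eta> \<zeta> 1 i) + (\<Sum>i\<in>{2..n}. sff_sectional n s 1 i)"
    unfolding RicB_def using K[of 1] by (simp add: sum.distrib)
  have tau: "tauB RN n e = (\<Sum>j\<in>{1..n}. \<Sum>i\<in>{1..<j}. qch_sectional a b c \<eta> \<zeta> i j)
      + (\<Sum>j\<in>{1..n}. \<Sum>i\<in>{1..<j}. sff_sectional n s i j)"
    unfolding tauB_def sum.distrib[symmetric] by (intro sum.cong refl) (rule K, auto)
  have tproj: "tproj n e xi = (\<Sum>i\<in>{1..n}. \<eta> i *\<^sub>R e i)" "tproj n e (J xi) = (\<Sum>i\<in>{1..n}. \<zeta> i *\<^sub>R e i)"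
    unfolding tproj_def \<eta>_def \<zeta>_def by simp_all
  have first: "inner xi (e 1) = \<eta> 1" "inner (J xi) (e 1) = \<zeta> 1" unfolding \<eta>_def \<zeta>_def by simp_all
  have cross: "\<eta> 1 *\<^sub>R tproj n e (J xi) - \<zeta> 1 *\<^sub>R tproj n e xi = (\<Sum>i\<in>{1..n}. (\<eta> 1 * \<zeta> i - \<zeta> 1 * \<eta> i) *\<^sub>R e i)"
    unfolding tproj by (simp add: scaleR_sum_right sum_subtractf scaleR_diff_left)
  have bound: "ricci_lower_bound e = - ((real n - 2) * (real n - 1) * (real n + 1) / 8) * a
        - ((real n - 2) / 8) * (real n - ((\<eta> 1)\<^sup>2 + (\<zeta> 1)\<^sup>2)) * b
        - ((real n - 1) * ((\<Sum>i\<in>{1..n}. (\<eta> i)\<^sup>2) * (\<Sum>i\<in>{1..n}. (\<zeta> i)\<^sup>2) - (\<Sum>i\<in>{1..n}. \<eta> i * \<zeta> i)\<^sup>2)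
           - (\<Sum>i\<in>{1..n}. (\<eta> 1 * \<zeta> i - \<zeta> 1 * \<eta> i)\<^sup>2)) * c
        + (real n - 1) * tauB RN n e
        - (3 * real n - 1) * (real n - 2) / (2 * (3 * real n + 5)) * (\<Sum>r\<in>{1..n}. (\<Sum>i\<in>{1..n}. s i i r)\<^sup>2)"
    unfolding ricci_lower_bound_def Let_def norm_meanH_onb[OF o, folded s_def]
    unfolding first cross
    unfolding tproj norm_onb_comb[OF o] inner_onb_combs[OF o]
    using n3 n(2) by (simp add: of_nat_diff ac_simps)
  show ?thesis
    unfolding Ric tau bound sum_qch_sectional_first[OF n(1) unit] sum_qch_sectional_pairs[OF unit]
      ricci_excess_def s_def[symmetric]
    using n by (simp add: field_simps)
qed

text \<open>Transposing \<open>e 1\<close> and \<open>e k\<close> moves the vanishing of \<open>s 1 1 1\<close> and of \<open>s 1 a b\<close> (\<open>a, b \<noteq> 1\<close>),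
  the equality case of \<open>ricci_excess_nonneg\<close>, to the index \<open>k\<close>.\<close>
lemma sff_coeff_axial_eq_0:
  assumes o: "onb T n e" and k: "k \<in> {1..n}"
    and excess: "ricci_excess n (sff_coeff (e \<circ> Transposition.transpose 1 k)) = 0"
  shows "sff_coeff e k k k = 0"
    and "p \<in> {1..n} \<Longrightarrow> q \<in> {1..n} \<Longrightarrow> p \<noteq> k \<Longrightarrow> q \<noteq> k \<Longrightarrow> sff_coeff e k p q = 0"
proof -
  define \<sigma> where "\<sigma> = Transposition.transpose 1 k"
  have one: "1 \<in> {1..n}" using n3 by simp
  have o': "onb T n (e \<circ> \<sigma>)" unfolding \<sigma>_def by (rule onb_transpose[OF o k])
  have \<sigma>: "\<sigma> (\<sigma> p) = p" "\<sigma> 1 = k" "\<sigma> (Suc 0) = k" "p \<in> {1..n} \<Longrightarrow> \<sigma> p \<in> {1..n}" for p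
    using k unfolding \<sigma>_def by (auto simp: Transposition.transpose_def)
  have s: "sff_coeff (e \<circ> \<sigma>) p q r = sff_coeff e (\<sigma> p) (\<sigma> q) (\<sigma> r)"
    if "p \<in> {1..n}" "q \<in> {1..n}" "r \<in> {1..n}" for p q r
    unfolding \<sigma>_def using sff_coeff_transpose[OF k that] .
  have zero: "sff_coeff (e \<circ> \<sigma>) 1 1 1 = 0 \<and> (\<forall>p\<in>{2..n}. \<forall>q\<in>{2..n}. sff_coeff (e \<circ> \<sigma>) 1 p q = 0)"
    using ricci_excess_nonneg(2)[of n "sff_coeff (e \<circ> \<sigma>)", OF n3 sff_coeff_swap12[OF o'] sff_coeff_swap23[OF o']]
      excess unfolding \<sigma>_def by blast
  show "sff_coeff e k k k = 0" using zero s[OF one one one] by (simp add: \<sigma>)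
  assume pq: "p \<in> {1..n}" "q \<in> {1..n}" "p \<noteq> k" "q \<noteq> k"
  then have "\<sigma> p \<in> {2..n}" "\<sigma> q \<in> {2..n}" using k by (auto simp: \<sigma>_def Transposition.transpose_def)
  then have "sff_coeff (e \<circ> \<sigma>) 1 (\<sigma> p) (\<sigma> q) = 0" using zero by blast
  then show "sff_coeff e k p q = 0" using s[OF one \<sigma>(4)[OF pq(1)] \<sigma>(4)[OF pq(2)]] by (simp add: \<sigma>)
qed

lemma sff_coeff_eq_0_if_excess_vanishes:
  assumes o: "onb T n e"
    and excess: "\<And>k. k \<in> {1..n} \<Longrightarrow> ricci_excess n (sff_coeff (e \<circ> Transposition.transpose 1 k)) = 0"
    and ijl: "i \<in> {1..n}" "j \<in> {1..n}" "l \<in> {1..n}"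
  shows "sff_coeff e i j l = 0"
proof -
  have axial1: "sff_coeff e k k k = 0" if "k \<in> {1..n}" for k
    using sff_coeff_axial_eq_0(1)[OF o that excess[OF that]] .
  have axial2: "sff_coeff e k p q = 0" if "k \<in> {1..n}" "p \<in> {1..n}" "q \<in> {1..n}" "p \<noteq> k" "q \<noteq> k" for k p q
    using sff_coeff_axial_eq_0(2)[OF o that(1) excess[OF that(1)] that(2-5)] .
  have rotate: "sff_coeff e i i l = sff_coeff e l i i" "sff_coeff e i j i = sff_coeff e j i i"
    using sff_coeff_swap12[OF o] sff_coeff_swap23[OF o] by metis+
  consider "j = i" "l = i" | "j = i" "l \<noteq> i" | "j \<noteq> i" "l = i" | "j \<noteq> i" "l \<noteq> i" by blast
  then show ?thesis
  proof cases
    case 1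
    then show ?thesis using axial1[OF ijl(1)] by simp
  next
    case 2
    then show ?thesis using axial2[OF ijl(3) ijl(1) ijl(1)] rotate(1) by auto
  next
    case 3
    then show ?thesis using axial2[OF ijl(2) ijl(1) ijl(1)] rotate(2) by auto
  next
    case 4
    then show ?thesis using axial2[OF ijl(1) ijl(2) ijl(3)] by auto
  qed
qed

lemma h_eq_0_if_excess_vanishes:
  assumes "dim T = n" and excess: "\<And>e. onb T n e \<Longrightarrow> ricci_excess n (sff_coeff e) = 0"
    and "x \<in> T" "y \<in> T"
  shows "h x y = 0"
proof -
  obtain e where o: "onb T n e" using onb_exists[OF assms(1)] .
  have "sff_coeff e i j l = 0" if "i \<in> {1..n}" "j \<in> {1..n}" "l \<in> {1..n}" for i j l
    using sff_coeff_eq_0_if_excess_vanishes[OF o excess[OF onb_transpose[OF o]] that] .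
  then show ?thesis using h_eq_0_if_sff_coeff_eq_0[OF o _ assms(3,4)] by blast
qed

lemma excess_vanishes_if_totally_geodesic:
  assumes "\<forall>x\<in>T. \<forall>y\<in>T. h x y = 0" and o: "onb T n e"
  shows "ricci_excess n (sff_coeff e) = 0"
proof -
  have "sff_coeff e = (\<lambda>i j k. 0)" using assms onb_in[OF o] by (auto simp: sff_coeff_def fun_eq_iff)
  then show ?thesis by (simp add: ricci_excess_def sff_sectional_def)
qed

end

theorem theorem5p1:
  fixes n :: nat
    and J :: "'a::euclidean_space \<Rightarrow> 'a"
    and xi :: 'a
    and a b c :: real
    and Rbar RN :: "'a \<Rightarrow> 'a \<Rightarrow> 'a \<Rightarrow> 'a \<Rightarrow> real"
    and T :: "'a set"
    and h :: "'a \<Rightarrow> 'a \<Rightarrow> 'a"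
  assumes n3: "n \<ge> 3"
    and dimM: "DIM('a) = 2 * n"
    and J_lin: "linear J"
    and J_sq: "\<And>v. J (J v) = - v"
    and J_isom: "\<And>u v. inner (J u) (J v) = inner u v"
    and xi_unit: "norm xi = 1"
    and QCH: "\<And>X Y Z U. Rbar X Y Z U =
               a * piT J X Y Z U + b * PhiT J xi X Y Z U + c * PsiT J xi X Y Z U"
    and T_sub: "subspace T"
    and dimN: "dim T = n"
    and Lagr: "J ` T = {v. \<forall>w\<in>T. inner v w = 0}"
    and h_sym: "\<And>x y. x \<in> T \<Longrightarrow> y \<in> T \<Longrightarrow> h x y = h y x"
    and h_add: "\<And>x y z. x \<in> T \<Longrightarrow> y \<in> T \<Longrightarrow> z \<in> T \<Longrightarrow> h (x + y) z = h x z + h y z"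
    and h_scale: "\<And>r x z. x \<in> T \<Longrightarrow> z \<in> T \<Longrightarrow> h (r *\<^sub>R x) z = r *\<^sub>R h x z"
    and h_normal: "\<And>x y w. x \<in> T \<Longrightarrow> y \<in> T \<Longrightarrow> w \<in> T \<Longrightarrow> inner (h x y) w = 0"
    and h_Kaehler: "\<And>x y z. x \<in> T \<Longrightarrow> y \<in> T \<Longrightarrow> z \<in> T \<Longrightarrow>
                      inner (h x y) (J z) = inner (h x z) (J y)"
    and Gauss: "\<And>X Y Z U. X \<in> T \<Longrightarrow> Y \<in> T \<Longrightarrow> Z \<in> T \<Longrightarrow> U \<in> T \<Longrightarrow>
                  RN X Y Z U = Rbar X Y Z U + inner (h X U) (h Y Z) - inner (h X Z) (h Y U)"
  defines "rhs \<equiv> (\<lambda>e::nat \<Rightarrow> 'a.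
      let X = e 1; etaT = tproj n e xi; etT = tproj n e (J xi) in
        - (real (n - 2) * real (n - 1) * real (n + 1) / 8) * a
        - (real (n - 2) / 8) * (real n - ((inner xi X)\<^sup>2 + (inner (J xi) X)\<^sup>2)) * b
        - ((real n - 1) * ((norm etaT)\<^sup>2 * (norm etT)\<^sup>2 - (inner etaT etT)\<^sup>2)
           - (norm (inner xi X *\<^sub>R etT - inner (J xi) X *\<^sub>R etaT))\<^sup>2) * c
        + (real n - 1) * tauB RN n e
        - (real (3 * n - 1) * real (n - 2) * (real n)\<^sup>2 / (2 * real (3 * n + 5)))
            * (norm (meanH h n e))\<^sup>2)"
  shows "(\<forall>X e. X \<in> T \<and> norm X = 1 \<and> onb T n e \<and> e 1 = X \<longrightarrow> RicB RN n e \<ge> rhs e)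
       \<and> ((\<forall>X e. X \<in> T \<and> norm X = 1 \<and> onb T n e \<and> e 1 = X \<longrightarrow> RicB RN n e = rhs e)
          \<longleftrightarrow> (\<forall>x\<in>T. \<forall>y\<in>T. h x y = 0))"
proof -
  interpret lagrangian_qch n J xi a b c Rbar RN T h
    by (rule lagrangian_qch.intro[OF n3 J_lin J_sq J_isom xi_unit QCH T_sub Lagr
          h_sym h_add h_scale h_normal h_Kaehler Gauss])
  have gap: "RicB RN n e - rhs e = ricci_excess n (sff_coeff e)" if "onb T n e" for e
    using RicB_minus_ricci_lower_bound[OF that] unfolding rhs_def ricci_lower_bound_def .
  have nonneg: "ricci_excess n (sff_coeff e) \<ge> 0" if "onb T n e" for e
    using ricci_excess_nonneg(1)[OF n3 sff_coeff_swap12[OF that] sff_coeff_swap23[OF that]] .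
  show ?thesis
  proof (intro conjI iffI allI impI ballI)
    fix X e assume "X \<in> T \<and> norm X = 1 \<and> onb T n e \<and> e 1 = X"
    then show "RicB RN n e \<ge> rhs e" using gap nonneg by fastforce
  next
    fix x y assume equality: "\<forall>X e. X \<in> T \<and> norm X = 1 \<and> onb T n e \<and> e 1 = X \<longrightarrow> RicB RN n e = rhs e"
      and "x \<in> T" "y \<in> T"
    have "ricci_excess n (sff_coeff e) = 0" if "onb T n e" for e
      using equality gap[OF that] onb_first_unit[OF that] that by fastforce
    then show "h x y = 0" using h_eq_0_if_excess_vanishes dimN \<open>x \<in> T\<close> \<open>y \<in> T\<close> by blast
  next
    fix X e assume "\<forall>x\<in>T. \<forall>y\<in>T. h x y = 0" and "X \<in> T \<and> norm X = 1 \<and> onb T n e \<and> e 1 = X"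
    then show "RicB RN n e = rhs e" using gap excess_vanishes_if_totally_geodesic by fastforce
  qed
qed

end
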